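(* Let $k$ be a field of characteristic $\neq 2$, let $\mathcal O$ be the Lie algebra described in the context, and let $\mathcal I$ be a maximal (proper) ideal of $\mathcal O$. Then the quotient $\mathcal O/\mathcal I$ is either a one-dimensional Lie algebra over $k$, or a three-dimensional simple Lie algebra over a finite field extension of $k$.
   Context: $\mathcal O$ is the Lie algebra over $k$ which is a free $k[t]$-module with basis $v_0,v_1,v_2$, with $k[t]$-bilinear bracket determined by $[v_0,v_1]=-v_2(t-1)$, $[v_1,v_2]=-v_0$, $[v_2,v_0]=v_1t$ (it is isomorphic to the Onsager algebra, the Lie algebra over $k$ with generators $A,B$ and relations $[A,[A,[A,B]]]=4[A,B]$, $[B,[B,[B,A]]]=4[B,A]$). *)

theory Defs
  imports "HOL-Computational_Algebra.Polynomial" "HOL-Algebra.Embedded_Algebras"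
begin

text \<open>The Lie algebra O over a field k: the free k[t]-module with basis v0, v1, v2.
  An element x0 v0 + x1 v1 + x2 v2 (xi in k[t]) is the triple (x0, x1, x2).\<close>

type_synonym 'a ons = "'a poly \<times> 'a poly \<times> 'a poly"

definition ons_zero :: "'a::field ons" where
  "ons_zero = (0, 0, 0)"

definition ons_add :: "'a::field ons \<Rightarrow> 'a ons \<Rightarrow> 'a ons" where
  "ons_add x y = (case x of (x0, x1, x2) \<Rightarrow> case y of (y0, y1, y2) \<Rightarrow> (x0 + y0, x1 + y1, x2 + y2))"

definition ons_diff :: "'a::field ons \<Rightarrow> 'a ons \<Rightarrow> 'a ons" where
  "ons_diff x y = (case x of (x0, x1, x2) \<Rightarrow> case y of (y0, y1, y2) \<Rightarrow> (x0 - y0, x1 - y1, x2 - y2))"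

definition ons_smul :: "'a::field \<Rightarrow> 'a ons \<Rightarrow> 'a ons" where
  "ons_smul a x = (case x of (x0, x1, x2) \<Rightarrow> (Polynomial.smult a x0, Polynomial.smult a x1, Polynomial.smult a x2))"

text \<open>The k[t]-bilinear bracket determined by
  [v0,v1] = -v2 (t-1), [v1,v2] = -v0, [v2,v0] = v1 t (and skew-symmetry).\<close>
definition ons_bracket :: "'a::field ons \<Rightarrow> 'a ons \<Rightarrow> 'a ons" where
  "ons_bracket x y = (case x of (x0, x1, x2) \<Rightarrow> case y of (y0, y1, y2) \<Rightarrow>
     ( - (x1 * y2 - x2 * y1),
       [:0, 1:] * (x2 * y0 - x0 * y2),
       - ([:-1, 1:] * (x0 * y1 - x1 * y0))))"

definition ons_ideal :: "'a::field ons set \<Rightarrow> bool" where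
  "ons_ideal J \<longleftrightarrow> ons_zero \<in> J
     \<and> (\<forall>x\<in>J. \<forall>y\<in>J. ons_add x y \<in> J)
     \<and> (\<forall>a. \<forall>x\<in>J. ons_smul a x \<in> J)
     \<and> (\<forall>x. \<forall>y\<in>J. ons_bracket x y \<in> J)"

definition ons_maximal_ideal :: "'a::field ons set \<Rightarrow> bool" where
  "ons_maximal_ideal I \<longleftrightarrow> ons_ideal I \<and> I \<noteq> UNIV
     \<and> (\<forall>J. ons_ideal J \<and> I \<subseteq> J \<longrightarrow> J = I \<or> J = UNIV)"

definition quot_one_dim :: "'a::field ons set \<Rightarrow> bool" where
  "quot_one_dim I \<longleftrightarrow> (\<exists>v. v \<notin> I \<and> (\<forall>x. \<exists>c. ons_diff x (ons_smul c v) \<in> I))"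

definition type_field :: "'a::field ring" where
  "type_field = \<lparr>carrier = UNIV, monoid.mult = (*), one = 1, zero = 0, add = (+)\<rparr>"

text \<open>K is an abstract field (HOL-Algebra record) with an embedding iota of k, of finite
  dimension over iota(k); act is a K-action on O/I (given on representatives, well defined
  modulo I) extending the k-action and making the bracket K-bilinear; O/I has K-dimension 3
  and is simple as a Lie algebra over K.  The carrier type (O \<Rightarrow> O) is large enough to
  hold a copy of any such K, since K embeds into the k-linear endomorphisms of O/I.\<close>
definition quot_3dim_simple_over_finite_ext :: "'a::field ons set \<Rightarrow> bool" where
  "quot_3dim_simple_over_finite_ext I \<longleftrightarrow>
    (\<exists>(K :: ('a ons \<Rightarrow> 'a ons) ring) (\<iota> :: 'a \<Rightarrow> ('a ons \<Rightarrow> 'a ons))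
       (act :: ('a ons \<Rightarrow> 'a ons) \<Rightarrow> 'a ons \<Rightarrow> 'a ons).
      field K
      \<and> \<iota> \<in> ring_hom type_field K
      \<and> subfield (range \<iota>) K
      \<and> ring.finite_dimension K (range \<iota>) (carrier K)
      \<comment> \<open>act is a well-defined K-vector space structure on O/I extending the k-structure\<close>
      \<and> (\<forall>c\<in>carrier K. \<forall>x y. ons_diff x y \<in> I \<longrightarrow> ons_diff (act c x) (act c y) \<in> I)
      \<and> (\<forall>c\<in>carrier K. \<forall>x y. ons_diff (act c (ons_add x y)) (ons_add (act c x) (act c y)) \<in> I)
      \<and> (\<forall>c\<in>carrier K. \<forall>d\<in>carrier K. \<forall>x.
            ons_diff (act (c \<oplus>\<^bsub>K\<^esub> d) x) (ons_add (act c x) (act d x)) \<in> I)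
      \<and> (\<forall>c\<in>carrier K. \<forall>d\<in>carrier K. \<forall>x.
            ons_diff (act (c \<otimes>\<^bsub>K\<^esub> d) x) (act c (act d x)) \<in> I)
      \<and> (\<forall>a x. ons_diff (act (\<iota> a) x) (ons_smul a x) \<in> I)
      \<comment> \<open>the bracket of O/I is K-bilinear\<close>
      \<and> (\<forall>c\<in>carrier K. \<forall>x y. ons_diff (ons_bracket (act c x) y) (act c (ons_bracket x y)) \<in> I)
      \<and> (\<forall>c\<in>carrier K. \<forall>x y. ons_diff (ons_bracket x (act c y)) (act c (ons_bracket x y)) \<in> I)
      \<comment> \<open>O/I has dimension 3 over K\<close>
      \<and> (\<exists>e1 e2 e3.
           (\<forall>x. \<exists>c1\<in>carrier K. \<exists>c2\<in>carrier K. \<exists>c3\<in>carrier K.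
               ons_diff x (ons_add (act c1 e1) (ons_add (act c2 e2) (act c3 e3))) \<in> I)
         \<and> (\<forall>c1\<in>carrier K. \<forall>c2\<in>carrier K. \<forall>c3\<in>carrier K.
               ons_add (act c1 e1) (ons_add (act c2 e2) (act c3 e3)) \<in> I
               \<longrightarrow> c1 = \<zero>\<^bsub>K\<^esub> \<and> c2 = \<zero>\<^bsub>K\<^esub> \<and> c3 = \<zero>\<^bsub>K\<^esub>))
      \<comment> \<open>O/I is simple over K: non-abelian, and its only K-ideals are 0 and O/I
          (K-ideals of O/I correspond to ideals J of O containing I and stable under act)\<close>
      \<and> (\<exists>x y. ons_bracket x y \<notin> I)
      \<and> (\<forall>J. ons_ideal J \<and> I \<subseteq> J \<and> (\<forall>c\<in>carrier K. \<forall>x\<in>J. act c x \<in> J)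
             \<longrightarrow> J = I \<or> J = UNIV))"

end

theory Submission
  imports Defs "HOL-Library.Product_Plus" "HOL-Library.Set_Algebras"
    "HOL-Algebra.Algebraic_Closure_Type"
begin

text \<open>If every bracket lies in \<open>I\<close>, then \<open>O/I\<close> is abelian, so every subspace containing \<open>I\<close>
  is an ideal and maximality leaves a line. Otherwise maximality forces \<open>I\<close> to be a
  \<open>k[t]\<close>-submodule with \<open>I + [O, O] = O\<close>, and every \<open>g \<in> k[t]\<close> acts on \<open>O/I\<close> either as zero or
  injectively. Hence the annihilator of \<open>O/I\<close> is a nonzero prime ideal \<open>(q)\<close> of \<open>k[t]\<close>, and
  bracketing with \<open>v0, v1, v2\<close> shows \<open>I = qO\<close>. So \<open>O/I = (k[t]/(q))\<^sup>3\<close> is three-dimensional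
  over the finite extension \<open>k[t]/(q)\<close> of \<open>k\<close>, and it is simple because \<open>I\<close> is maximal.\<close>

definition ons_pmul :: "'a::field poly \<Rightarrow> 'a ons \<Rightarrow> 'a ons" where
  "ons_pmul p x = (case x of (x0, x1, x2) \<Rightarrow> (p * x0, p * x1, p * x2))"

lemma ons_add_eq [simp]: "ons_add x y = x + y"
  by (cases x; cases y) (simp add: ons_add_def)

lemma ons_diff_eq [simp]: "ons_diff x y = x - y"
  by (cases x; cases y) (simp add: ons_diff_def)

lemma ons_zero_eq [simp]: "ons_zero = 0"
  by (simp add: ons_zero_def zero_prod_def)

lemma ons_smul_eq [simp]: "ons_smul a x = ons_pmul [:a:] x"
  by (cases x) (simp add: ons_smul_def ons_pmul_def)

lemma ons_simps:
  "ons_pmul p (x0, x1, x2) = (p * x0, p * x1, p * x2)"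
  "ons_bracket (x0, x1, x2) (y0, y1, y2) =
     (- (x1 * y2 - x2 * y1), [:0, 1:] * (x2 * y0 - x0 * y2), - ([:-1, 1:] * (x0 * y1 - x1 * y0)))"
  by (simp_all add: ons_pmul_def ons_bracket_def)

lemma ons_pmul_zero_right [simp]: "ons_pmul p 0 = 0"
  by (simp add: zero_prod_def ons_simps)

lemma ons_pmul_zero_left [simp]: "ons_pmul 0 x = 0"
  by (cases x) (simp add: zero_prod_def ons_simps)

lemma ons_pmul_one [simp]: "ons_pmul 1 x = x"
  by (cases x) (simp add: ons_simps)

lemma ons_pmul_add_right: "ons_pmul p (x + y) = ons_pmul p x + ons_pmul p y"
  by (cases x; cases y) (simp add: ons_simps algebra_simps)

lemma ons_pmul_add_left: "ons_pmul (p + r) x = ons_pmul p x + ons_pmul r x"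
  by (cases x) (simp add: ons_simps algebra_simps)

lemma ons_pmul_pmul: "ons_pmul p (ons_pmul r x) = ons_pmul (p * r) x"
  by (cases x) (simp add: ons_simps algebra_simps)

lemma ons_pmul_commute: "ons_pmul p (ons_pmul r x) = ons_pmul r (ons_pmul p x)"
  by (simp add: ons_pmul_pmul mult.commute)

lemma ons_bracket_add_right: "ons_bracket x (y + z) = ons_bracket x y + ons_bracket x z"
  by (cases x; cases y; cases z) (simp add: ons_simps algebra_simps)

lemma ons_bracket_diff_left: "ons_bracket (x - y) z = ons_bracket x z - ons_bracket y z"
  by (cases x; cases y; cases z) (simp add: ons_simps algebra_simps)

lemma ons_bracket_diff_right: "ons_bracket x (y - z) = ons_bracket x y - ons_bracket x z"
  by (cases x; cases y; cases z) (simp add: ons_simps algebra_simps)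

lemma ons_bracket_pmul_left: "ons_bracket (ons_pmul p x) y = ons_pmul p (ons_bracket x y)"
  by (cases x; cases y) (simp add: ons_simps algebra_simps)

lemma ons_bracket_pmul_right: "ons_bracket x (ons_pmul p y) = ons_pmul p (ons_bracket x y)"
  by (cases x; cases y) (simp add: ons_simps algebra_simps)

lemma range_ons_pmul_iff:
  "(x0, x1, x2) \<in> range (ons_pmul q) \<longleftrightarrow> q dvd x0 \<and> q dvd x1 \<and> q dvd x2"
proof
  assume "q dvd x0 \<and> q dvd x1 \<and> q dvd x2"
  then obtain y0 y1 y2 where "x0 = q * y0" "x1 = q * y1" "x2 = q * y2"
    by (auto elim!: dvdE)
  then show "(x0, x1, x2) \<in> range (ons_pmul q)"
    by (auto simp: ons_simps intro!: range_eqI[of _ _ "(y0, y1, y2)"])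
qed (auto simp: ons_pmul_def split: prod.splits)

text \<open>This is the derived algebra \<open>[O, O]\<close>; only the inclusion of all brackets is needed.\<close>

definition ons_derived :: "'a::field ons set" where
  "ons_derived = {(x0, x1, x2). [:0, 1:] dvd x1 \<and> [:-1, 1:] dvd x2}"

lemma ons_bracket_in_derived: "ons_bracket x y \<in> ons_derived"
  by (cases x; cases y)
     (simp only: ons_simps ons_derived_def mem_Collect_eq case_prod_conv dvd_minus_iff dvd_triv_left
       simp_thms)

lemma ons_derivedE:
  assumes "d \<in> ons_derived"
  obtains a b c where "d = (a, [:0, 1:] * b, [:-1, 1:] * c)"
  using assms by (cases d) (auto simp: ons_derived_def elim!: dvdE)

definition ons_subspace :: "'a::field ons set \<Rightarrow> bool" where
  "ons_subspace S \<longleftrightarrow>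
     0 \<in> S \<and> (\<forall>x\<in>S. \<forall>y\<in>S. x + y \<in> S) \<and> (\<forall>a. \<forall>x\<in>S. ons_pmul [:a:] x \<in> S)"

lemma ons_subspaceI:
  "0 \<in> S \<Longrightarrow> (\<And>x y. x \<in> S \<Longrightarrow> y \<in> S \<Longrightarrow> x + y \<in> S)
     \<Longrightarrow> (\<And>a x. x \<in> S \<Longrightarrow> ons_pmul [:a:] x \<in> S) \<Longrightarrow> ons_subspace S"
  by (simp add: ons_subspace_def)

lemma ons_subspaceD:
  assumes "ons_subspace S"
  shows "0 \<in> S" and "x \<in> S \<Longrightarrow> y \<in> S \<Longrightarrow> x + y \<in> S" and "x \<in> S \<Longrightarrow> ons_pmul [:a:] x \<in> S"
  using assms by (simp_all add: ons_subspace_def)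

lemma ons_ideal_iff: "ons_ideal J \<longleftrightarrow> ons_subspace J \<and> (\<forall>x. \<forall>y\<in>J. ons_bracket x y \<in> J)"
  unfolding ons_ideal_def ons_subspace_def by simp

lemma ons_idealI:
  "ons_subspace J \<Longrightarrow> (\<And>x y. y \<in> J \<Longrightarrow> ons_bracket x y \<in> J) \<Longrightarrow> ons_ideal J"
  unfolding ons_ideal_iff by blast

lemma ons_ideal_subspace: "ons_ideal J \<Longrightarrow> ons_subspace J"
  unfolding ons_ideal_iff by blast

lemma ons_ideal_bracket: "ons_ideal J \<Longrightarrow> y \<in> J \<Longrightarrow> ons_bracket x y \<in> J"
  unfolding ons_ideal_iff by blast

lemmas ons_ideal_zero = ons_subspaceD(1)[OF ons_ideal_subspace]
lemmas ons_ideal_add = ons_subspaceD(2)[OF ons_ideal_subspace]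

lemma ons_ideal_diff: "ons_ideal J \<Longrightarrow> x \<in> J \<Longrightarrow> y \<in> J \<Longrightarrow> x - y \<in> J"
proof -
  assume J: "ons_ideal J" "x \<in> J" "y \<in> J"
  have "x - y = x + ons_pmul [:-1:] y"
    by (cases x; cases y) (simp add: ons_simps)
  also have "\<dots> \<in> J"
    using J by (intro ons_ideal_add ons_subspaceD(3)[OF ons_ideal_subspace])
  finally show ?thesis .
qed

lemma ons_ideal_pmul_preimage:
  assumes J: "ons_ideal J"
  shows "ons_ideal {z. ons_pmul g z \<in> J}"
proof (intro ons_idealI ons_subspaceI)
  show "0 \<in> {z. ons_pmul g z \<in> J}"
    using ons_ideal_zero[OF J] by simp
  show "x + y \<in> {z. ons_pmul g z \<in> J}" if "x \<in> {z. ons_pmul g z \<in> J}" "y \<in> {z. ons_pmul g z \<in> J}" for x y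
    using that ons_ideal_add[OF J] by (simp add: ons_pmul_add_right)
  show "ons_pmul [:a:] x \<in> {z. ons_pmul g z \<in> J}" if "x \<in> {z. ons_pmul g z \<in> J}" for a x
    using that ons_subspaceD(3)[OF ons_ideal_subspace[OF J]] ons_pmul_commute[of g "[:a:]" x] by simp
  show "ons_bracket x y \<in> {z. ons_pmul g z \<in> J}" if "y \<in> {z. ons_pmul g z \<in> J}" for x y
    using that ons_ideal_bracket[OF J] by (simp add: ons_bracket_pmul_right[symmetric])
qed

lemma ons_ideal_range_pmul: "ons_ideal (range (ons_pmul q))"
proof (intro ons_idealI ons_subspaceI)
  show "0 \<in> range (ons_pmul q)"
    by (rule range_eqI[of _ _ 0]) simp
  show "x + y \<in> range (ons_pmul q)" if "x \<in> range (ons_pmul q)" "y \<in> range (ons_pmul q)" for x y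
    using that by (auto simp: ons_pmul_add_right[symmetric])
  show "ons_pmul [:a:] x \<in> range (ons_pmul q)" if "x \<in> range (ons_pmul q)" for a x
    using that by (auto simp: ons_pmul_commute[of "[:a:]" q])
  show "ons_bracket x y \<in> range (ons_pmul q)" if "y \<in> range (ons_pmul q)" for x y
    using that by (auto simp: ons_bracket_pmul_right)
qed

lemma range_ons_pmul_bracket_left:
  "x \<in> range (ons_pmul q) \<Longrightarrow> ons_bracket x y \<in> range (ons_pmul q)"
  by (auto simp: ons_bracket_pmul_left)


lemma ons_subspace_derived: "ons_subspace ons_derived"
  by (rule ons_subspaceI) (auto simp: ons_derived_def zero_prod_def ons_simps dvd_smult)

lemma ons_subspace_line: "ons_subspace (range (\<lambda>c. ons_pmul [:c:] v))"
proof (rule ons_subspaceI)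
  show "0 \<in> range (\<lambda>c. ons_pmul [:c:] v)"
    by (rule range_eqI[of _ _ 0]) simp
  show "x + y \<in> range (\<lambda>c. ons_pmul [:c:] v)"
    if "x \<in> range (\<lambda>c. ons_pmul [:c:] v)" "y \<in> range (\<lambda>c. ons_pmul [:c:] v)" for x y
    using that by (auto simp: ons_pmul_add_left[symmetric])
  show "ons_pmul [:a:] x \<in> range (\<lambda>c. ons_pmul [:c:] v)" if "x \<in> range (\<lambda>c. ons_pmul [:c:] v)" for a x
    using that by (auto simp: ons_pmul_pmul)
qed

lemma ons_subspace_pmul_image:
  assumes S: "ons_subspace S"
  shows "ons_subspace (ons_pmul p ` S)"
proof (rule ons_subspaceI)
  show "0 \<in> ons_pmul p ` S"
    using ons_subspaceD(1)[OF S] by (metis image_eqI ons_pmul_zero_right)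
  show "x + y \<in> ons_pmul p ` S" if "x \<in> ons_pmul p ` S" "y \<in> ons_pmul p ` S" for x y
    using that ons_subspaceD(2)[OF S] by (auto simp: ons_pmul_add_right[symmetric])
  show "ons_pmul [:a:] x \<in> ons_pmul p ` S" if "x \<in> ons_pmul p ` S" for a x
    using that ons_subspaceD(3)[OF S]
    by (auto simp: ons_pmul_commute[of "[:a:]" p] intro!: image_eqI[of _ _ "ons_pmul [:a:] _"])
qed

lemma set_plus_subspace_left: "ons_subspace S \<Longrightarrow> x \<in> I \<Longrightarrow> x \<in> I + S"
  using ons_subspaceD(1) by (metis add.right_neutral set_plus_intro)

lemma ons_ideal_set_plus:
  assumes I: "ons_ideal I" and S: "ons_subspace S"
    and bracket: "\<And>x s. s \<in> S \<Longrightarrow> ons_bracket x s \<in> I + S"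
  shows "ons_ideal (I + S)"
proof (intro ons_idealI ons_subspaceI)
  show "0 \<in> I + S"
    using ons_ideal_zero[OF I] ons_subspaceD(1)[OF S] by (metis add_0 set_plus_intro)
next
  fix x y assume "x \<in> I + S" "y \<in> I + S"
  then obtain i s j r where "i \<in> I" "s \<in> S" "j \<in> I" "r \<in> S" "x = i + s" "y = j + r"
    by (blast elim: set_plus_elim)
  then have "x + y = (i + j) + (s + r)" and "i + j \<in> I" and "s + r \<in> S"
    using ons_ideal_add[OF I] ons_subspaceD(2)[OF S] by (simp_all add: algebra_simps)
  then show "x + y \<in> I + S"
    by (simp add: set_plus_intro)
next
  fix a x assume "x \<in> I + S"
  then obtain i s where "i \<in> I" "s \<in> S" "x = i + s"
    by (blast elim: set_plus_elim)
  then show "ons_pmul [:a:] x \<in> I + S"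
    using ons_subspaceD(3)[OF ons_ideal_subspace[OF I]] ons_subspaceD(3)[OF S]
    by (simp add: ons_pmul_add_right set_plus_intro)
next
  fix x y assume "y \<in> I + S"
  then obtain i s where "i \<in> I" "s \<in> S" "y = i + s"
    by (blast elim: set_plus_elim)
  moreover obtain j r where "j \<in> I" "r \<in> S" "ons_bracket x s = j + r"
    using bracket[OF \<open>s \<in> S\<close>] by (blast elim: set_plus_elim)
  ultimately have "ons_bracket x y = (ons_bracket x i + j) + r"
    by (simp add: ons_bracket_add_right add.assoc)
  moreover have "ons_bracket x i + j \<in> I"
    using I \<open>i \<in> I\<close> \<open>j \<in> I\<close> by (simp add: ons_ideal_add ons_ideal_bracket)
  ultimately show "ons_bracket x y \<in> I + S"
    using \<open>r \<in> S\<close> by (simp add: set_plus_intro)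
qed

lemma ons_maximal_ideal_absorbs:
  assumes max: "ons_maximal_ideal I" and S: "ons_subspace S"
    and bracket: "\<And>x s. s \<in> S \<Longrightarrow> ons_bracket x s \<in> I + S"
  shows "S \<subseteq> I \<or> I + S = UNIV"
proof -
  have I: "ons_ideal I"
    using max by (simp add: ons_maximal_ideal_def)
  have "I \<subseteq> I + S"
    using set_plus_subspace_left[OF S] by blast
  then have "I + S = I \<or> I + S = UNIV"
    using max ons_ideal_set_plus[OF I S bracket] by (simp add: ons_maximal_ideal_def)
  moreover have "S \<subseteq> I + S"
    using ons_ideal_zero[OF I] by (metis add_0 set_plus_intro subsetI)
  ultimately show ?thesis
    by blast
qed

lemma quot_one_dim_if_abelian:
  assumes max: "ons_maximal_ideal I" and abelian: "\<And>x y. ons_bracket x y \<in> I"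
  shows "quot_one_dim I"
proof -
  obtain v where "v \<notin> I"
    using max by (auto simp: ons_maximal_ideal_def)
  define S where "S = range (\<lambda>c. ons_pmul [:c:] v)"
  have "ons_subspace S"
    unfolding S_def by (rule ons_subspace_line)
  moreover have "v \<in> S"
    unfolding S_def by (rule range_eqI[of _ _ 1]) (simp add: pCons_one)
  moreover have "ons_bracket x s \<in> I + S" for x s
    using set_plus_subspace_left[OF \<open>ons_subspace S\<close> abelian] .
  ultimately have "I + S = UNIV"
    using ons_maximal_ideal_absorbs[OF max] \<open>v \<notin> I\<close> by blast
  have "\<exists>c. x - ons_pmul [:c:] v \<in> I" for x
  proof -
    obtain i s where "i \<in> I" "s \<in> S" "x = i + s"
      using \<open>I + S = UNIV\<close> by (blast elim: set_plus_elim)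
    moreover obtain c where "s = ons_pmul [:c:] v"
      using \<open>s \<in> S\<close> by (auto simp: S_def)
    ultimately show ?thesis
      by (intro exI[of _ c]) simp
  qed
  then show ?thesis
    using \<open>v \<notin> I\<close> unfolding quot_one_dim_def ons_diff_eq ons_smul_eq by blast
qed

section \<open>Principal ideals of Euclidean rings\<close>

lemma euclidean_ring_ideal_principal:
  fixes A :: "'a::euclidean_ring set"
  assumes "A \<noteq> {}"
    and add: "\<And>a b. a \<in> A \<Longrightarrow> b \<in> A \<Longrightarrow> a + b \<in> A"
    and mult: "\<And>a c. a \<in> A \<Longrightarrow> c * a \<in> A"
  shows "\<exists>q. \<forall>g. g \<in> A \<longleftrightarrow> q dvd g"
proof (cases "A \<subseteq> {0}")
  case True
  with \<open>A \<noteq> {}\<close> have "A = {0}"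
    by blast
  then show ?thesis
    by (intro exI[of _ 0]) simp
next
  case False
  then obtain f where "f \<in> A" "f \<noteq> 0"
    by blast
  then obtain q where q: "q \<in> A" "q \<noteq> 0"
    and min: "\<And>g. g \<in> A \<Longrightarrow> g \<noteq> 0 \<Longrightarrow> euclidean_size q \<le> euclidean_size g"
    using ex_has_least_nat[of "\<lambda>g. g \<in> A \<and> g \<noteq> 0" f euclidean_size] by blast
  show ?thesis
  proof (intro exI allI iffI)
    fix g assume "g \<in> A"
    then have "g + (- (g div q)) * q \<in> A"
      using add mult q(1) by blast
    then have "g mod q \<in> A"
      by (simp add: minus_div_mult_eq_mod[symmetric])
    then have "g mod q = 0"
      using min[of "g mod q"] mod_size_less[OF q(2), of g] by force
    then show "q dvd g"
      by (simp add: mod_eq_0_iff_dvd)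
  next
    fix g assume "q dvd g"
    then show "g \<in> A"
      using mult q(1) by (auto simp: mult.commute elim!: dvdE)
  qed
qed

lemma prime_elem_inverse_mod:
  fixes p q :: "'a::euclidean_ring"
  assumes q: "prime_elem q" and "\<not> q dvd p"
  obtains r where "q dvd p * r - 1"
proof -
  let ?A = "{p * a + q * b | a b. True}"
  have A_ne: "?A \<noteq> {}"
    by blast
  have A_add: "x + y \<in> ?A" if xy: "x \<in> ?A" "y \<in> ?A" for x y
  proof -
    obtain a b a' b' where "x = p * a + q * b" "y = p * a' + q * b'"
      using xy by blast
    then have "x + y = p * (a + a') + q * (b + b')"
      by (simp add: algebra_simps)
    then show ?thesis
      by blast
  qed
  have A_mult: "c * x \<in> ?A" if x: "x \<in> ?A" for c x
  proof -
    obtain a b where "x = p * a + q * b"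
      using x by blast
    then have "c * x = p * (c * a) + q * (c * b)"
      by (simp add: algebra_simps)
    then show ?thesis
      by blast
  qed
  obtain d where d: "\<And>g. g \<in> ?A \<longleftrightarrow> d dvd g"
    using euclidean_ring_ideal_principal[OF A_ne A_add A_mult] by blast
  have "p = p * 1 + q * 0" "q = p * 0 + q * 1"
    by simp_all
  then have "p \<in> ?A" "q \<in> ?A"
    by blast+
  then have "d dvd p" "d dvd q"
    by (simp_all only: d)
  have "is_unit d"
  proof (rule ccontr)
    assume "\<not> is_unit d"
    with q \<open>d dvd q\<close> have "q dvd d"
      by (rule prime_elemD2)
    then have "q dvd p"
      using \<open>d dvd p\<close> by (rule dvd_trans)
    with \<open>\<not> q dvd p\<close> show False
      by contradiction
  qed
  then have "1 \<in> ?A"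
    by (simp only: d)
  then obtain a b where "1 = p * a + q * b"
    by blast
  then have "p * a - 1 = q * (- b)"
    by (simp add: algebra_simps)
  then show thesis
    by (intro that[of a]) simp
qed

section \<open>Maximal ideals with nonabelian quotient\<close>

definition ons_annihilator :: "'a::field ons set \<Rightarrow> 'a poly set" where
  "ons_annihilator J = {g. \<forall>x. ons_pmul g x \<in> J}"

lemma ons_annihilatorI: "(\<And>x. ons_pmul g x \<in> J) \<Longrightarrow> g \<in> ons_annihilator J"
  by (simp add: ons_annihilator_def)

lemma ons_annihilatorD: "g \<in> ons_annihilator J \<Longrightarrow> ons_pmul g x \<in> J"
  unfolding ons_annihilator_def by blast

locale nonabelian_maximal_ideal =
  fixes I :: "'a::field ons set"
  assumes maximal: "ons_maximal_ideal I"
    and nonabelian: "\<exists>x y. ons_bracket x y \<notin> I"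
begin

lemma ideal: "ons_ideal I"
  using maximal by (simp add: ons_maximal_ideal_def)

lemma proper: "I \<noteq> UNIV"
  using maximal by (simp add: ons_maximal_ideal_def)

text \<open>If \<open>p I \<subseteq> I\<close> failed, maximality would give \<open>I + p I = O\<close>, and then every bracket would lie
  in \<open>I\<close>, because \<open>[x, p j] = [p x, j]\<close>.\<close>

lemma pmul_mem:
  assumes "y \<in> I"
  shows "ons_pmul p y \<in> I"
proof -
  define S where "S = ons_pmul p ` I"
  have "ons_subspace S"
    unfolding S_def by (rule ons_subspace_pmul_image[OF ons_ideal_subspace[OF ideal]])
  moreover have bracket_S: "ons_bracket x s \<in> I" if "s \<in> S" for x s
  proof -
    obtain j where "j \<in> I" "s = ons_pmul p j"
      using \<open>s \<in> S\<close> by (auto simp: S_def)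
    then have "ons_bracket x s = ons_bracket (ons_pmul p x) j"
      by (simp add: ons_bracket_pmul_right ons_bracket_pmul_left)
    then show ?thesis
      using ons_ideal_bracket[OF ideal \<open>j \<in> I\<close>] by simp
  qed
  then have "ons_bracket x s \<in> I + S" if "s \<in> S" for x s
    using that set_plus_subspace_left[OF \<open>ons_subspace S\<close>] by blast
  ultimately have "S \<subseteq> I \<or> I + S = UNIV"
    by (rule ons_maximal_ideal_absorbs[OF maximal])
  moreover have "ons_bracket x z \<in> I" if "I + S = UNIV" for x z
  proof -
    obtain i s where "i \<in> I" "s \<in> S" "z = i + s"
      using \<open>I + S = UNIV\<close> by (metis UNIV_I set_plus_elim)
    then show ?thesis
      using ideal bracket_S by (simp add: ons_bracket_add_right ons_ideal_add ons_ideal_bracket)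
  qed
  ultimately show ?thesis
    using assms nonabelian S_def by blast
qed

lemma pmul_cancel:
  assumes "g \<notin> ons_annihilator I" and "ons_pmul g z \<in> I"
  shows "z \<in> I"
proof -
  have "I \<subseteq> {z. ons_pmul g z \<in> I}"
    using pmul_mem by blast
  then have "{z. ons_pmul g z \<in> I} = I \<or> {z. ons_pmul g z \<in> I} = UNIV"
    using maximal ons_ideal_pmul_preimage[OF ideal] by (simp add: ons_maximal_ideal_def)
  moreover have "{z. ons_pmul g z \<in> I} \<noteq> UNIV"
    using assms(1) ons_annihilatorI by blast
  ultimately show ?thesis
    using assms(2) by blast
qed

lemma derived_complements:
  obtains a b c where "x - (a, [:0, 1:] * b, [:-1, 1:] * c) \<in> I"
proof -
  have "ons_bracket y d \<in> I + ons_derived" for y d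
    using set_plus_intro[OF ons_ideal_zero[OF ideal] ons_bracket_in_derived] by simp
  then have "ons_derived \<subseteq> I \<or> I + ons_derived = UNIV"
    by (rule ons_maximal_ideal_absorbs[OF maximal ons_subspace_derived])
  then have "I + ons_derived = UNIV"
    using nonabelian ons_bracket_in_derived by blast
  then obtain i d where "i \<in> I" "d \<in> ons_derived" "x = i + d"
    by (blast elim: set_plus_elim)
  moreover obtain a b c where "d = (a, [:0, 1:] * b, [:-1, 1:] * c)"
    using \<open>d \<in> ons_derived\<close> by (rule ons_derivedE)
  ultimately show thesis
    using that[of a b c] by simp
qed

text \<open>The element \<open>v0\<close> generates \<open>[O, O]\<close> as an ideal.\<close>

lemma pmul_derived_mem:
  assumes v0: "ons_pmul g (1, 0, 0) \<in> I" and "d \<in> ons_derived"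
  shows "ons_pmul g d \<in> I"
proof -
  obtain a b c where d: "d = (a, [:0, 1:] * b, [:-1, 1:] * c)"
    using \<open>d \<in> ons_derived\<close> by (rule ons_derivedE)
  have "ons_pmul g d = ons_pmul a (ons_pmul g (1, 0, 0))
      + ons_pmul b (ons_bracket (0, 0, 1) (ons_pmul g (1, 0, 0)))
      + ons_pmul c (ons_bracket (0, 1, 0) (ons_pmul g (1, 0, 0)))"
    by (simp add: d ons_simps algebra_simps)
  also have "\<dots> \<in> I"
    by (intro ons_ideal_add[OF ideal] pmul_mem ons_ideal_bracket[OF ideal] v0)
  finally show ?thesis .
qed

lemma annihilator_iff_pmul_v0: "g \<in> ons_annihilator I \<longleftrightarrow> ons_pmul g (1, 0, 0) \<in> I"
proof
  assume "ons_pmul g (1, 0, 0) \<in> I"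
  show "g \<in> ons_annihilator I"
  proof (rule ccontr)
    assume "g \<notin> ons_annihilator I"
    then have "ons_pmul 1 (1, 0, 0) \<in> I"
      using pmul_cancel \<open>ons_pmul g (1, 0, 0) \<in> I\<close> by simp
    then have "ons_bracket x y \<in> I" for x y
      using pmul_derived_mem[OF _ ons_bracket_in_derived, of 1] by simp
    then show False
      using nonabelian by blast
  qed
qed (rule ons_annihilatorD)

lemma annihilator_nonzero: "\<exists>f\<in>ons_annihilator I. f \<noteq> 0"
proof -
  obtain a b c where i: "(0, 1, 0) - (a, [:0, 1:] * b, [:-1, 1:] * c) \<in> I"
    by (rule derived_complements)
  define f where "f = [:-1, 1:] * (1 - [:0, 1:] * b)"
  have "ons_pmul f (1, 0, 0)
      = ons_bracket (0, 1, 0) (ons_bracket (1, 0, 0) ((0, 1, 0) - (a, [:0, 1:] * b, [:-1, 1:] * c)))"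
    by (simp add: f_def ons_simps algebra_simps)
  also have "\<dots> \<in> I"
    using i by (intro ons_ideal_bracket[OF ideal])
  finally have "f \<in> ons_annihilator I"
    unfolding annihilator_iff_pmul_v0 .
  moreover have "Polynomial.coeff (1 - [:0, 1:] * b) 0 = 1"
    by simp
  then have "1 - [:0, 1:] * b \<noteq> 0"
    by (metis coeff_0 one_neq_zero)
  then have "f \<noteq> 0"
    unfolding f_def by (intro no_zero_divisors) simp_all
  ultimately show ?thesis
    by blast
qed

lemma annihilator_principal: "\<exists>q. \<forall>g. g \<in> ons_annihilator I \<longleftrightarrow> q dvd g"
proof -
  have nonempty: "ons_annihilator I \<noteq> {}"
    using annihilator_nonzero by blast
  have add: "a + b \<in> ons_annihilator I"
    if "a \<in> ons_annihilator I" "b \<in> ons_annihilator I" for a b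
    using that ons_ideal_add[OF ideal] by (intro ons_annihilatorI) (simp add: ons_pmul_add_left ons_annihilatorD)
  have mult: "c * a \<in> ons_annihilator I" if "a \<in> ons_annihilator I" for a c
    using that pmul_mem by (intro ons_annihilatorI) (simp add: ons_pmul_pmul[symmetric] ons_annihilatorD)
  show ?thesis
    by (rule euclidean_ring_ideal_principal[OF nonempty add mult])
qed

context
  fixes q :: "'a poly"
  assumes generator: "\<And>g. g \<in> ons_annihilator I \<longleftrightarrow> q dvd g"
begin

lemma generator_dvd_iff_pmul_v0: "q dvd g \<longleftrightarrow> ons_pmul g (1, 0, 0) \<in> I"
  by (simp only: generator[symmetric] annihilator_iff_pmul_v0)

lemma generator_dvd_imp_pmul: "q dvd g \<Longrightarrow> ons_pmul g x \<in> I"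
  by (rule ons_annihilatorD) (simp only: generator)

lemma generator_not_unit: "\<not> q dvd 1"
proof
  assume "q dvd 1"
  then have "ons_pmul 1 x \<in> I" for x
    by (rule generator_dvd_imp_pmul)
  then have "I = UNIV"
    by auto
  with proper show False ..
qed

lemma generator_prime: "prime_elem q"
proof (rule prime_elemI)
  obtain f where f: "f \<in> ons_annihilator I" "f \<noteq> 0"
    using annihilator_nonzero by blast
  from f(1) have "q dvd f"
    by (simp only: generator)
  with f(2) show "q \<noteq> 0"
    by auto
  show "\<not> q dvd 1"
    by (rule generator_not_unit)
  show "q dvd a \<or> q dvd b" if "q dvd a * b" for a b
  proof (cases "q dvd a")
    case False
    then have "a \<notin> ons_annihilator I"
      by (simp only: generator not_False_eq_True)
    have "ons_pmul b x \<in> I" for x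
    proof (rule pmul_cancel[OF \<open>a \<notin> ons_annihilator I\<close>])
      show "ons_pmul a (ons_pmul b x) \<in> I"
        using generator_dvd_imp_pmul[OF that, of x] by (simp add: ons_pmul_pmul)
    qed
    then have "b \<in> ons_annihilator I"
      by (rule ons_annihilatorI)
    then have "q dvd b"
      by (simp only: generator)
    then show ?thesis ..
  qed simp
qed

lemma generator_not_dvd_t: "\<not> q dvd [:0, 1:]"
proof
  assume t: "q dvd [:0, 1:]"
  obtain a b c where i: "(0, 1, 0) - (a, [:0, 1:] * b, [:-1, 1:] * c) \<in> I"
    by (rule derived_complements)
  have "ons_pmul (1 - [:0, 1:] * b) (1, 0, 0)
      = ons_bracket (0, 0, 1) ((0, 1, 0) - (a, [:0, 1:] * b, [:-1, 1:] * c))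
        + ons_pmul [:0, 1:] (0, a, 0)"
    by (simp add: ons_simps)
  also have "\<dots> \<in> I"
    using ons_ideal_bracket[OF ideal i] generator_dvd_imp_pmul[OF t] by (rule ons_ideal_add[OF ideal])
  finally have "q dvd 1 - [:0, 1:] * b"
    unfolding generator_dvd_iff_pmul_v0 .
  moreover have "q dvd [:0, 1:] * b"
    using t by (rule dvd_mult2)
  ultimately have "q dvd (1 - [:0, 1:] * b) + [:0, 1:] * b"
    by (rule dvd_add)
  then show False
    using generator_not_unit by simp
qed

lemma generator_not_dvd_t_minus_1: "\<not> q dvd [:-1, 1:]"
proof
  assume t1: "q dvd [:-1, 1:]"
  obtain a b c where i: "(0, 0, 1) - (a, [:0, 1:] * b, [:-1, 1:] * c) \<in> I"
    by (rule derived_complements)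
  have "ons_pmul ([:-1, 1:] * c - 1) (1, 0, 0)
      = ons_bracket (0, 1, 0) ((0, 0, 1) - (a, [:0, 1:] * b, [:-1, 1:] * c))
        + ons_pmul [:-1, 1:] (0, 0, a)"
    by (simp add: ons_simps)
  also have "\<dots> \<in> I"
    using ons_ideal_bracket[OF ideal i] generator_dvd_imp_pmul[OF t1] by (rule ons_ideal_add[OF ideal])
  finally have "q dvd [:-1, 1:] * c - 1"
    unfolding generator_dvd_iff_pmul_v0 .
  moreover have "q dvd [:-1, 1:] * c"
    using t1 by (rule dvd_mult2)
  ultimately have "q dvd [:-1, 1:] * c - ([:-1, 1:] * c - 1)"
    by (rule dvd_diff[rotated])
  then show False
    using generator_not_unit by simp
qed

lemma eq_range_pmul_generator: "I = range (ons_pmul q)"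
proof
  show "range (ons_pmul q) \<subseteq> I"
    using generator_dvd_imp_pmul[OF dvd_refl] by blast
next
  show "I \<subseteq> range (ons_pmul q)"
  proof
    fix x assume "x \<in> I"
    obtain a b c where x: "x = (a, b, c)"
      by (cases x)
    have "ons_pmul ([:-1, 1:] * b) (1, 0, 0) = ons_bracket (0, 1, 0) (ons_bracket (1, 0, 0) x)"
      by (simp add: x ons_simps)
    also have "\<dots> \<in> I"
      using \<open>x \<in> I\<close> by (intro ons_ideal_bracket[OF ideal])
    finally have "q dvd [:-1, 1:] * b"
      unfolding generator_dvd_iff_pmul_v0 .
    then have "q dvd b"
      using prime_elem_dvd_multD[OF generator_prime] generator_not_dvd_t_minus_1 by blast
    have "ons_pmul (- ([:0, 1:] * c)) (1, 0, 0) = ons_bracket (0, 0, 1) (ons_bracket (1, 0, 0) x)"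
      by (simp add: x ons_simps)
    also have "\<dots> \<in> I"
      using \<open>x \<in> I\<close> by (intro ons_ideal_bracket[OF ideal])
    finally have "q dvd - ([:0, 1:] * c)"
      unfolding generator_dvd_iff_pmul_v0 .
    then have "q dvd c"
      using prime_elem_dvd_multD[OF generator_prime] generator_not_dvd_t
      unfolding dvd_minus_iff by blast
    have "ons_pmul (- ([:0, 1:] * ([:-1, 1:] * a))) (1, 0, 0)
        = ons_bracket (0, 0, 1) (ons_bracket (1, 0, 0) (ons_bracket (0, 1, 0) x))"
      by (simp add: x ons_simps)
    also have "\<dots> \<in> I"
      using \<open>x \<in> I\<close> by (intro ons_ideal_bracket[OF ideal])
    finally have "q dvd - ([:0, 1:] * ([:-1, 1:] * a))"
      unfolding generator_dvd_iff_pmul_v0 .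
    then have "q dvd a"
      using prime_elem_dvd_multD[OF generator_prime] generator_not_dvd_t generator_not_dvd_t_minus_1
      unfolding dvd_minus_iff by blast
    with \<open>q dvd b\<close> \<open>q dvd c\<close> show "x \<in> range (ons_pmul q)"
      by (simp add: x range_ons_pmul_iff)
  qed
qed
end

end

section \<open>The residue field \<open>k[t]/(q)\<close>\<close>

text \<open>The field \<open>k[t]/(q)\<close>, realised as the ring of multiplication operators on \<open>O/qO\<close>:
  an element of \<open>O/qO\<close> is represented by its componentwise remainder modulo \<open>q\<close>,
  and the product of the field is composition.\<close>

definition residue_scale :: "'a::field poly \<Rightarrow> 'a poly \<Rightarrow> 'a ons \<Rightarrow> 'a ons" where
  "residue_scale q p x = (case x of (x0, x1, x2) \<Rightarrow> ((p * x0) mod q, (p * x1) mod q, (p * x2) mod q))"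

definition residue_field :: "'a::field poly \<Rightarrow> ('a ons \<Rightarrow> 'a ons) ring" where
  "residue_field q = \<lparr>carrier = range (residue_scale q), monoid.mult = (\<circ>),
     one = residue_scale q 1, zero = residue_scale q 0, add = (\<lambda>c d x. c x + d x)\<rparr>"

lemma residue_field_simps:
  "carrier (residue_field q) = range (residue_scale q)"
  "c \<otimes>\<^bsub>residue_field q\<^esub> d = c \<circ> d"
  "c \<oplus>\<^bsub>residue_field q\<^esub> d = (\<lambda>x. c x + d x)"
  "\<one>\<^bsub>residue_field q\<^esub> = residue_scale q 1"
  "\<zero>\<^bsub>residue_field q\<^esub> = residue_scale q 0"
  by (simp_all add: residue_field_def)

lemma residue_scale_simp:
  "residue_scale q p (x0, x1, x2) = ((p * x0) mod q, (p * x1) mod q, (p * x2) mod q)"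
  by (simp add: residue_scale_def)

lemma residue_scale_comp: "residue_scale q a \<circ> residue_scale q b = residue_scale q (a * b)"
  by (auto simp: fun_eq_iff residue_scale_simp mod_mult_right_eq mult.assoc)

lemma residue_scale_add: "residue_scale q a x + residue_scale q b x = residue_scale q (a + b) x"
  by (cases x) (simp add: residue_scale_simp poly_mod_add_left distrib_right)

lemma residue_scale_add_right:
  "residue_scale q p (x + y) = residue_scale q p x + residue_scale q p y"
  by (cases x; cases y) (simp add: residue_scale_simp distrib_left poly_mod_add_left)

lemma residue_scale_diff_right:
  "residue_scale q p (x - y) = residue_scale q p x - residue_scale q p y"
  by (cases x; cases y) (simp add: residue_scale_simp right_diff_distrib poly_mod_diff_left)

lemma residue_scale_range_pmul: "x \<in> range (ons_pmul q) \<Longrightarrow> residue_scale q p x = 0"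
  by (auto simp: ons_simps residue_scale_simp zero_prod_def)

lemma residue_scale_congruent: "residue_scale q p x - ons_pmul p x \<in> range (ons_pmul q)"
  by (cases x) (simp add: ons_simps residue_scale_simp range_ons_pmul_iff mod_eq_dvd_iff[symmetric])

lemma residue_scale_eq_iff: "residue_scale q a = residue_scale q b \<longleftrightarrow> a mod q = b mod q"
proof
  assume "residue_scale q a = residue_scale q b"
  then have "residue_scale q a (1, 0, 0) = residue_scale q b (1, 0, 0)"
    by simp
  then show "a mod q = b mod q"
    by (simp add: residue_scale_simp)
next
  assume "a mod q = b mod q"
  then have "(a * y) mod q = (b * y) mod q" for y
    by (rule mod_mult_cong) simp
  then show "residue_scale q a = residue_scale q b"
    by (auto simp: fun_eq_iff residue_scale_simp)
qed

lemma type_field_eq: "type_field = ring_of_type_algebra"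
  by (simp add: type_field_def ring_of_type_algebra_def)

lemma residue_scale_ring_hom: "residue_scale q \<in> ring_hom ring_of_type_algebra (residue_field q)"
  by (rule ring_hom_memI)
     (simp_all add: ring_of_type_algebra_def residue_field_simps residue_scale_comp residue_scale_add)

lemma cring_residue_field: "cring (residue_field q)"
proof -
  have "ring ((residue_field q)\<lparr>carrier := residue_scale q ` carrier ring_of_type_algebra,
      zero := residue_scale q \<zero>\<^bsub>ring_of_type_algebra\<^esub>\<rparr>)"
    by (rule ring.ring_hom_imp_img_ring[OF ring_from_type_algebra residue_scale_ring_hom])
  then have "ring (residue_field q)"
    by (simp add: ring_of_type_algebra_def residue_field_def)
  moreover have "comm_monoid_axioms (residue_field q)"
    by (rule comm_monoid_axioms.intro) (auto simp: residue_field_simps residue_scale_comp mult.commute)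
  ultimately show ?thesis
    by (intro cring.intro comm_monoid.intro ring.is_monoid)
qed

lemma field_residue_field:
  assumes "prime_elem q"
  shows "field (residue_field q)"
proof (rule cring.cring_fieldI2[OF cring_residue_field])
  show "\<zero>\<^bsub>residue_field q\<^esub> \<noteq> \<one>\<^bsub>residue_field q\<^esub>"
  proof
    assume "\<zero>\<^bsub>residue_field q\<^esub> = \<one>\<^bsub>residue_field q\<^esub>"
    then have "q dvd 0 - 1"
      by (simp only: residue_field_simps residue_scale_eq_iff mod_eq_dvd_iff)
    then show False
      using prime_elem_not_unit[OF assms] by simp
  qed
  fix c assume "c \<in> carrier (residue_field q)" "c \<noteq> \<zero>\<^bsub>residue_field q\<^esub>"
  then obtain p where c: "c = residue_scale q p" and "\<not> q dvd p"
    by (auto simp: residue_field_simps residue_scale_eq_iff mod_eq_0_iff_dvd)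
  then obtain r where "q dvd p * r - 1"
    using assms prime_elem_inverse_mod by blast
  then have "(p * r) mod q = 1 mod q"
    by (simp add: mod_eq_dvd_iff)
  then have "c \<otimes>\<^bsub>residue_field q\<^esub> residue_scale q r = \<one>\<^bsub>residue_field q\<^esub>"
    by (simp add: c residue_field_simps residue_scale_comp residue_scale_eq_iff)
  then show "\<exists>d\<in>carrier (residue_field q). c \<otimes>\<^bsub>residue_field q\<^esub> d = \<one>\<^bsub>residue_field q\<^esub>"
    by (auto simp: residue_field_simps)
qed

lemma residue_const_ring_hom:
  "(\<lambda>a. residue_scale q [:a:]) \<in> ring_hom type_field (residue_field q)"
  by (rule ring_hom_memI)
     (simp_all add: type_field_def residue_field_simps residue_scale_comp residue_scale_add pCons_one
       mult.commute)

lemma subfield_residue_const: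
  assumes "prime_elem q"
  shows "subfield (range (\<lambda>a. residue_scale q [:a:])) (residue_field q)"
proof -
  interpret K: field "residue_field q"
    using assms by (rule field_residue_field)
  interpret k: field "type_field :: 'a ring"
    unfolding type_field_eq by (rule field_from_type_algebra)
  have "ring_hom_ring type_field (residue_field q) (\<lambda>a. residue_scale q [:a:])"
    by (rule ring_hom_ringI2[OF k.is_ring K.is_ring residue_const_ring_hom])
  from ring_hom_ring.img_is_subfield(2)[OF this k.carrier_is_subfield K.one_not_zero]
  show ?thesis
    by (simp add: type_field_def)
qed

lemma combine_residue_scale:
  "ring.combine (residue_field q) (map (\<lambda>i. residue_scale q (f i)) is)
     (map (\<lambda>i. residue_scale q (g i)) is) = residue_scale q (\<Sum>i\<leftarrow>is. f i * g i)"
proof -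
  interpret K: cring "residue_field q"
    by (rule cring_residue_field)
  show ?thesis
    by (induction "is") (simp_all add: residue_field_simps residue_scale_comp residue_scale_add)
qed

lemma finite_dimension_residue_field:
  assumes "prime_elem q"
  shows "ring.finite_dimension (residue_field q) (range (\<lambda>a. residue_scale q [:a:]))
           (carrier (residue_field q))"
proof -
  interpret K: field "residue_field q"
    using assms by (rule field_residue_field)
  define n where "n = Polynomial.degree q"
  define Us where "Us = map (\<lambda>i. residue_scale q (Polynomial.monom 1 i)) [0..<Suc n]"
  have Us: "set Us \<subseteq> carrier (residue_field q)"
    by (auto simp: Us_def residue_field_simps)
  have "residue_scale q p \<in> K.Span (range (\<lambda>a. residue_scale q [:a:])) Us" for p
  proof -
    define r where "r = p mod q"
    have "Polynomial.degree r \<le> n"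
      using degree_mod_less[of q p] assms by (auto simp: r_def n_def)
    have "(\<Sum>i\<leftarrow>[0..<Suc n]. [:Polynomial.coeff r i:] * Polynomial.monom 1 i)
        = (\<Sum>i<Suc n. Polynomial.monom (Polynomial.coeff r i) i)"
      by (simp add: interv_sum_list_conv_sum_set_nat atLeast0LessThan smult_monom)
    also have "\<dots> = (\<Sum>i\<le>n. Polynomial.monom (Polynomial.coeff r i) i)"
      by (simp only: lessThan_Suc_atMost)
    also have "\<dots> = r"
      by (rule poly_as_sum_of_monoms') fact
    finally have sum_r: "(\<Sum>i\<leftarrow>[0..<Suc n]. [:Polynomial.coeff r i:] * Polynomial.monom 1 i) = r" .
    have "K.combine (map (\<lambda>i. residue_scale q [:Polynomial.coeff r i:]) [0..<Suc n]) Us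
        = residue_scale q r"
      unfolding Us_def combine_residue_scale sum_r ..
    also have "\<dots> = residue_scale q p"
      by (simp add: r_def residue_scale_eq_iff)
    finally have "residue_scale q p
        = K.combine (map (\<lambda>i. residue_scale q [:Polynomial.coeff r i:]) [0..<Suc n]) Us" ..
    moreover have "set (map (\<lambda>i. residue_scale q [:Polynomial.coeff r i:]) [0..<Suc n])
        \<subseteq> range (\<lambda>a. residue_scale q [:a:])"
      by auto
    ultimately show ?thesis
      unfolding K.Span_eq_combine_set[OF subfield_residue_const[OF assms] Us]
      by (intro CollectI exI conjI)
  qed
  then have "carrier (residue_field q) = K.Span (range (\<lambda>a. residue_scale q [:a:])) Us"
    using K.Span_in_carrier[OF subfieldE(3)[OF subfield_residue_const[OF assms]] Us]
    by (auto simp: residue_field_simps)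
  then show ?thesis
    using K.Span_finite_dimension[OF subfield_residue_const[OF assms] Us] by simp
qed

lemma residue_field_carrierE:
  assumes "c \<in> carrier (residue_field q)"
  obtains p where "c = residue_scale q p"
  using assms by (auto simp: residue_field_simps)

lemma residue_field_act_cong:
  assumes "c \<in> carrier (residue_field q)" and "x - y \<in> range (ons_pmul q)"
  shows "c x - c y \<in> range (ons_pmul q)"
proof -
  obtain p where c: "c = residue_scale q p"
    using assms(1) by (rule residue_field_carrierE)
  have "c x - c y = 0"
    using residue_scale_range_pmul[OF assms(2)] by (simp add: c residue_scale_diff_right)
  then show ?thesis
    using ons_ideal_zero[OF ons_ideal_range_pmul] by simp
qed

lemma residue_field_act_add:
  assumes "c \<in> carrier (residue_field q)"
  shows "c (x + y) - (c x + c y) \<in> range (ons_pmul q)"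
proof -
  obtain p where c: "c = residue_scale q p"
    using assms by (rule residue_field_carrierE)
  show ?thesis
    using ons_ideal_zero[OF ons_ideal_range_pmul] by (simp add: c residue_scale_add_right)
qed

lemma residue_field_act_bracket_left:
  assumes "c \<in> carrier (residue_field q)"
  shows "ons_bracket (c x) y - c (ons_bracket x y) \<in> range (ons_pmul q)"
proof -
  obtain p where c: "c = residue_scale q p"
    using assms by (rule residue_field_carrierE)
  have "ons_bracket (c x) y - c (ons_bracket x y)
      = ons_bracket (residue_scale q p x - ons_pmul p x) y
        - (residue_scale q p (ons_bracket x y) - ons_pmul p (ons_bracket x y))"
    by (simp add: c ons_bracket_diff_left ons_bracket_pmul_left)
  also have "\<dots> \<in> range (ons_pmul q)"
    by (intro ons_ideal_diff[OF ons_ideal_range_pmul] range_ons_pmul_bracket_left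
        residue_scale_congruent)
  finally show ?thesis .
qed

lemma residue_field_act_bracket_right:
  assumes "c \<in> carrier (residue_field q)"
  shows "ons_bracket x (c y) - c (ons_bracket x y) \<in> range (ons_pmul q)"
proof -
  obtain p where c: "c = residue_scale q p"
    using assms by (rule residue_field_carrierE)
  have "ons_bracket x (c y) - c (ons_bracket x y)
      = ons_bracket x (residue_scale q p y - ons_pmul p y)
        - (residue_scale q p (ons_bracket x y) - ons_pmul p (ons_bracket x y))"
    by (simp add: c ons_bracket_diff_right ons_bracket_pmul_right)
  also have "\<dots> \<in> range (ons_pmul q)"
    by (intro ons_ideal_diff[OF ons_ideal_range_pmul] ons_ideal_bracket[OF ons_ideal_range_pmul]
        residue_scale_congruent)
  finally show ?thesis .
qed

lemma residue_field_spans: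
  "\<exists>c1\<in>carrier (residue_field q). \<exists>c2\<in>carrier (residue_field q). \<exists>c3\<in>carrier (residue_field q).
     x - (c1 (1, 0, 0) + (c2 (0, 1, 0) + c3 (0, 0, 1))) \<in> range (ons_pmul q)"
proof -
  obtain a b c where x: "x = (a, b, c)"
    by (cases x)
  have "x - (residue_scale q a (1, 0, 0) + (residue_scale q b (0, 1, 0) + residue_scale q c (0, 0, 1)))
      \<in> range (ons_pmul q)"
    by (simp add: x residue_scale_simp range_ons_pmul_iff minus_mod_eq_mult_div)
  then show ?thesis
    by (auto simp: residue_field_simps)
qed

lemma residue_field_independent:
  assumes "c1 \<in> carrier (residue_field q)" "c2 \<in> carrier (residue_field q)"
    "c3 \<in> carrier (residue_field q)"
    and "c1 (1, 0, 0) + (c2 (0, 1, 0) + c3 (0, 0, 1)) \<in> range (ons_pmul q)"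
  shows "c1 = \<zero>\<^bsub>residue_field q\<^esub> \<and> c2 = \<zero>\<^bsub>residue_field q\<^esub> \<and> c3 = \<zero>\<^bsub>residue_field q\<^esub>"
proof -
  obtain a b c where
    c: "c1 = residue_scale q a" "c2 = residue_scale q b" "c3 = residue_scale q c"
    using assms(1-3) by (metis residue_field_carrierE)
  have "q dvd a" "q dvd b" "q dvd c"
    using assms(4) by (simp_all add: c residue_scale_simp range_ons_pmul_iff dvd_mod_iff)
  then show ?thesis
    by (simp add: c residue_field_simps residue_scale_eq_iff mod_eq_0_iff_dvd)
qed

lemma quot_3dim_simple_over_finite_ext_if_prime:
  fixes q :: "'a::field poly"
  assumes prime: "prime_elem q" and max: "ons_maximal_ideal (range (ons_pmul q))"
  shows "quot_3dim_simple_over_finite_ext (range (ons_pmul q))"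
proof -
  let ?Q = "range (ons_pmul q)" and ?K = "residue_field q"
  have "0 \<in> ?Q"
    by (rule ons_ideal_zero[OF ons_ideal_range_pmul])
  then have act_plus: "\<forall>c\<in>carrier ?K. \<forall>d\<in>carrier ?K. \<forall>x. (c \<oplus>\<^bsub>?K\<^esub> d) x - (c x + d x) \<in> ?Q"
    and act_mult: "\<forall>c\<in>carrier ?K. \<forall>d\<in>carrier ?K. \<forall>x. (c \<otimes>\<^bsub>?K\<^esub> d) x - c (d x) \<in> ?Q"
    by (simp_all add: residue_field_simps)
  have act_cong: "\<forall>c\<in>carrier ?K. \<forall>x y. x - y \<in> ?Q \<longrightarrow> c x - c y \<in> ?Q"
    using residue_field_act_cong by blast
  have act_add: "\<forall>c\<in>carrier ?K. \<forall>x y. c (x + y) - (c x + c y) \<in> ?Q"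
    using residue_field_act_add by blast
  have act_bracket_left: "\<forall>c\<in>carrier ?K. \<forall>x y. ons_bracket (c x) y - c (ons_bracket x y) \<in> ?Q"
    using residue_field_act_bracket_left by blast
  have act_bracket_right: "\<forall>c\<in>carrier ?K. \<forall>x y. ons_bracket x (c y) - c (ons_bracket x y) \<in> ?Q"
    using residue_field_act_bracket_right by blast
  have act_const: "\<forall>a x. residue_scale q [:a:] x - ons_pmul [:a:] x \<in> ?Q"
    using residue_scale_congruent by blast
  have dimension_3: "\<exists>e1 e2 e3.
      (\<forall>x. \<exists>c1\<in>carrier ?K. \<exists>c2\<in>carrier ?K. \<exists>c3\<in>carrier ?K. x - (c1 e1 + (c2 e2 + c3 e3)) \<in> ?Q)
    \<and> (\<forall>c1\<in>carrier ?K. \<forall>c2\<in>carrier ?K. \<forall>c3\<in>carrier ?K. c1 e1 + (c2 e2 + c3 e3) \<in> ?Q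
         \<longrightarrow> c1 = \<zero>\<^bsub>?K\<^esub> \<and> c2 = \<zero>\<^bsub>?K\<^esub> \<and> c3 = \<zero>\<^bsub>?K\<^esub>)"
    by (rule exI[of _ "(1, 0, 0)"], rule exI[of _ "(0, 1, 0)"], rule exI[of _ "(0, 0, 1)"])
       (use residue_field_spans residue_field_independent in blast)
  have "ons_bracket (0, 1, 0) (0, 0, 1) \<notin> ?Q"
    using prime_elem_not_unit[OF prime] by (simp add: ons_simps range_ons_pmul_iff)
  then have nonabelian: "\<exists>x y. ons_bracket x y \<notin> ?Q"
    by blast
  have simple: "\<forall>J. ons_ideal J \<and> ?Q \<subseteq> J \<and> (\<forall>c\<in>carrier ?K. \<forall>x\<in>J. c x \<in> J)
      \<longrightarrow> J = ?Q \<or> J = UNIV"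
    using max unfolding ons_maximal_ideal_def by blast
  show ?thesis
    unfolding quot_3dim_simple_over_finite_ext_def ons_diff_eq ons_add_eq ons_smul_eq
    by (rule exI[of _ ?K], rule exI[of _ "\<lambda>a. residue_scale q [:a:]"], rule exI[of _ "\<lambda>c x. c x"],
        intro conjI)
       (fact field_residue_field[OF prime] residue_const_ring_hom subfield_residue_const[OF prime]
         finite_dimension_residue_field[OF prime] act_cong act_add act_plus act_mult act_const
         act_bracket_left act_bracket_right dimension_3 nonabelian simple)+
qed

theorem corollary4p7:
  fixes I :: "'a::field ons set"
  assumes "(2::'a) \<noteq> 0"
    and "ons_maximal_ideal I"
  shows "quot_one_dim I \<or> quot_3dim_simple_over_finite_ext I"
proof (cases "\<forall>x y. ons_bracket x y \<in> I")
  case True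
  then show ?thesis
    using quot_one_dim_if_abelian[OF assms(2)] by blast
next
  case False
  then interpret nonabelian_maximal_ideal I
    using assms(2) unfolding nonabelian_maximal_ideal_def by blast
  obtain q where q: "\<And>g. g \<in> ons_annihilator I \<longleftrightarrow> q dvd g"
    using annihilator_principal by blast
  have I: "I = range (ons_pmul q)"
    by (rule eq_range_pmul_generator[OF q])
  have "quot_3dim_simple_over_finite_ext (range (ons_pmul q))"
    using generator_prime[OF q] assms(2)[unfolded I] by (rule quot_3dim_simple_over_finite_ext_if_prime)
  then show ?thesis
    unfolding I ..
qed

end
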